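(* Let $X$ be a topological space satisfying the $T_{3\frac12}$ separation axiom. The following assertions are equivalent: (a) $X$ is CCC; (b) $X$ satisfies CCC for cozero sets; (c) $C(X)$ has the countable sup property. Moreover, if $C_b(X)$ admits a strictly positive linear functional, then (a), (b) and (c) hold.
   Context: $X$ satisfies $T_{3\frac12}$ if it is Hausdorff and for every closed $F\subseteq X$ and $x\notin F$ there is a continuous $f\colon X\to\mathbb R$ with $f(x)=1$ and $f\equiv0$ on $F$. $X$ is CCC if every family of pairwise disjoint open subsets of $X$ is countable. A cozero set is a set $\{x: f(x)\neq0\}$ with $f\in C(X)$; $X$ satisfies CCC for cozero sets if every collection of pairwise disjoint cozero sets is countable. $C(X)$ (resp. $C_b(X)$) is the vector lattice of real-valued continuous (resp. bounded continuous) functions with the pointwise order. A vector lattice has the countable sup property if every nonempty subset possessing a supremum contains a countable subset with the same supremum. A positive functional $\varphi$ is strictly positive if $f\ge0$, $\varphi(f)=0$ imply $f=0$. *)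

theory Defs
  imports "HOL-Analysis.Analysis"
begin

definition tychonoff_space :: "'a topology \<Rightarrow> bool" where
  "tychonoff_space X \<longleftrightarrow> Hausdorff_space X \<and> completely_regular_space X"

definition ccc_space :: "'a topology \<Rightarrow> bool" where
  "ccc_space X \<longleftrightarrow>
     (\<forall>\<U>. (\<forall>U\<in>\<U>. openin X U) \<and> pairwise disjnt \<U> \<longrightarrow> countable \<U>)"

definition cozero_set :: "'a topology \<Rightarrow> ('a \<Rightarrow> real) \<Rightarrow> 'a set" where
  "cozero_set X f = {x \<in> topspace X. f x \<noteq> 0}"

definition is_cozero_set :: "'a topology \<Rightarrow> 'a set \<Rightarrow> bool" where
  "is_cozero_set X U \<longleftrightarrow> (\<exists>f. continuous_map X euclideanreal f \<and> U = cozero_set X f)"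

definition ccc_cozero :: "'a topology \<Rightarrow> bool" where
  "ccc_cozero X \<longleftrightarrow>
     (\<forall>\<U>. (\<forall>U\<in>\<U>. is_cozero_set X U) \<and> pairwise disjnt \<U> \<longrightarrow> countable \<U>)"

text \<open>C(X): continuous real functions on X, represented extensionally
  (value 0 outside the topspace), with pointwise order on the topspace.\<close>
definition CX :: "'a topology \<Rightarrow> ('a \<Rightarrow> real) set" where
  "CX X = {f. continuous_map X euclideanreal f \<and> (\<forall>x. x \<notin> topspace X \<longrightarrow> f x = 0)}"

definition CbX :: "'a topology \<Rightarrow> ('a \<Rightarrow> real) set" where
  "CbX X = {f \<in> CX X. \<exists>B. \<forall>x\<in>topspace X. \<bar>f x\<bar> \<le> B}"

definition pw_le :: "'a topology \<Rightarrow> ('a \<Rightarrow> real) \<Rightarrow> ('a \<Rightarrow> real) \<Rightarrow> bool" where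
  "pw_le X f g \<longleftrightarrow> (\<forall>x\<in>topspace X. f x \<le> g x)"

definition is_sup_CX :: "'a topology \<Rightarrow> ('a \<Rightarrow> real) set \<Rightarrow> ('a \<Rightarrow> real) \<Rightarrow> bool" where
  "is_sup_CX X S s \<longleftrightarrow> s \<in> CX X \<and> (\<forall>f\<in>S. pw_le X f s) \<and>
     (\<forall>g\<in>CX X. (\<forall>f\<in>S. pw_le X f g) \<longrightarrow> pw_le X s g)"

definition countable_sup_property_CX :: "'a topology \<Rightarrow> bool" where
  "countable_sup_property_CX X \<longleftrightarrow>
     (\<forall>S s. S \<subseteq> CX X \<and> S \<noteq> {} \<and> is_sup_CX X S s \<longrightarrow>
        (\<exists>T\<subseteq>S. countable T \<and> is_sup_CX X T s))"

definition strictly_positive_functional_Cb :: "'a topology \<Rightarrow> (('a \<Rightarrow> real) \<Rightarrow> real) \<Rightarrow> bool" where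
  "strictly_positive_functional_Cb X \<phi> \<longleftrightarrow>
     (\<forall>f\<in>CbX X. \<forall>g\<in>CbX X. \<forall>a b. \<phi> (\<lambda>x. a * f x + b * g x) = a * \<phi> f + b * \<phi> g) \<and>
     (\<forall>f\<in>CbX X. pw_le X (\<lambda>_. 0) f \<longrightarrow> \<phi> f \<ge> 0) \<and>
     (\<forall>f\<in>CbX X. pw_le X (\<lambda>_. 0) f \<and> \<phi> f = 0 \<longrightarrow> (\<forall>x\<in>topspace X. f x = 0))"

end

theory Submission
  imports Defs
begin

text \<open>
  Complete regularity provides bump functions: for \<open>x\<close> in an open \<open>U\<close> a continuous
  \<open>h : X \<rightarrow> [0,1]\<close> with \<open>h x = 1\<close> vanishing off \<open>U\<close>. Hence every nonempty open set
  contains a nonempty cozero set, which gives (a) \<open>\<Longleftrightarrow>\<close> (b).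

  (a) \<open>\<Longrightarrow>\<close> (c): if \<open>s = sup S\<close> in \<open>C(X)\<close>, then for every \<open>\<epsilon> > 0\<close> the open sets
  \<open>{s - \<epsilon> < f}\<close>, \<open>f \<in> S\<close>, are dense, since otherwise \<open>s - \<epsilon> h\<close> for a bump \<open>h\<close> would be a
  smaller upper bound. A maximal disjoint family of nonempty open sets, each inside
  one of them, is countable by CCC and still meets every nonempty open set; the
  countably many \<open>f\<close> it uses for \<open>\<epsilon> = 1/(n+1)\<close>, \<open>n \<in> \<nat>\<close>, already have supremum \<open>s\<close>.

  (c) \<open>\<Longrightarrow>\<close> (b): given a disjoint family \<open>\<U>\<close> of cozero sets, the functions \<open>0 \<le> u \<le> 1\<close>
  supported in a single member of \<open>\<U>\<close> or vanishing on \<open>\<Union>\<U>\<close> have supremum \<open>1\<close>. Each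
  function of a countable subfamily with the same supremum is nonzero on at most one set
  of \<open>\<U>\<close>; if \<open>\<U>\<close> were uncountable, on some nonempty \<open>Z \<in> \<U>\<close> they would all vanish, and
  \<open>1 - h\<close> for a bump \<open>h\<close> in \<open>Z\<close> would be an upper bound below \<open>1\<close>.

  Finally, a strictly positive functional \<open>\<phi>\<close> takes positive values on bumps \<open>h\<^sub>U\<close> in
  the members \<open>U\<close> of a disjoint open family, and their finite sums are bounded by
  \<open>\<phi> 1\<close>; so the family is countable.
\<close>

lemma openin_continuous_map_less:
  assumes "continuous_map X euclideanreal f" "continuous_map X euclideanreal g"
  shows "openin X {x \<in> topspace X. f x < g x}"
proof -
  have "openin X {x \<in> topspace X. g x - f x \<in> {0<..}}"
    using assms by (intro openin_continuous_map_preimage[where Y = euclideanreal] continuous_map_diff) auto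
  then show ?thesis by simp
qed

lemma openin_cozero_set:
  assumes "is_cozero_set X Z"
  shows "openin X Z"
proof -
  obtain f where f: "continuous_map X euclideanreal f" "Z = cozero_set X f"
    using assms unfolding is_cozero_set_def by blast
  have "openin X {x \<in> topspace X. f x \<in> - {0}}"
    using f(1) by (intro openin_continuous_map_preimage) auto
  then show ?thesis using f(2) by (simp add: cozero_set_def)
qed

lemma countable_if_countable_minus_empty:
  assumes "countable (\<U> - {{}})"
  shows "countable \<U>"
  using countable_subset[of \<U> "insert {} (\<U> - {{}})"] assms by auto

lemma ccc_spaceI:
  assumes "\<And>\<U>. \<forall>U\<in>\<U>. openin X U \<and> U \<noteq> {} \<Longrightarrow> pairwise disjnt \<U> \<Longrightarrow> countable \<U>"
  shows "ccc_space X"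
  unfolding ccc_space_def
proof (intro allI impI)
  fix \<U> assume "(\<forall>U\<in>\<U>. openin X U) \<and> pairwise disjnt \<U>"
  then have "countable (\<U> - {{}})"
    by (intro assms) (auto intro: pairwise_subset)
  then show "countable \<U>"
    by (rule countable_if_countable_minus_empty)
qed

lemma pairwise_disjnt_shrink:
  assumes "pairwise disjnt \<U>" "\<And>U. U \<in> \<U> \<Longrightarrow> Z U \<subseteq> U \<and> Z U \<noteq> {}"
  shows "inj_on Z \<U>" "pairwise disjnt (Z ` \<U>)"
proof -
  have "disjnt (Z U) (Z V)" if "U \<in> \<U>" "V \<in> \<U>" "U \<noteq> V" for U V
    using assms that by (meson disjnt_subset1 disjnt_subset2 pairwiseD)
  then show "inj_on Z \<U>" "pairwise disjnt (Z ` \<U>)"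
    using assms(2) by (fastforce simp: inj_on_def disjnt_self_iff_empty pairwise_def)+
qed

subsection \<open>Members of \<open>C(X)\<close> and bump functions\<close>

lemma CX_restrict:
  assumes "continuous_map X euclideanreal f"
  shows "(\<lambda>x. if x \<in> topspace X then f x else 0) \<in> CX X"
  using continuous_map_eq[OF assms, of "\<lambda>x. if x \<in> topspace X then f x else 0"]
  by (simp add: CX_def)

lemma zero_CX: "(\<lambda>x. 0) \<in> CX X"
  by (simp add: CX_def)

lemma CX_lincomb:
  assumes "f \<in> CX X" "g \<in> CX X"
  shows "(\<lambda>x. a * f x + b * g x) \<in> CX X"
  using assms unfolding CX_def
  by (auto intro!: continuous_map_add continuous_map_real_mult_left)

lemma indicator_topspace_CX: "(indicator (topspace X) :: 'a \<Rightarrow> real) \<in> CX X"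
proof -
  have "indicator (topspace X) = (\<lambda>x. if x \<in> topspace X then 1 else (0::real))"
    by (auto simp: indicator_def)
  then show ?thesis
    using CX_restrict[of X "\<lambda>x. 1"] by simp
qed

lemma completely_regular_bump:
  assumes "completely_regular_space X" "openin X U" "x \<in> U"
  obtains h where "h \<in> CX X" "\<forall>y\<in>topspace X. 0 \<le> h y \<and> h y \<le> 1" "h x = 1"
    "\<forall>y. y \<notin> U \<longrightarrow> h y = 0"
proof -
  obtain f where f: "continuous_map X euclideanreal f" "f x = 0" "f ` (topspace X - U) \<subseteq> {1}"
    using assms unfolding completely_regular_space_alt' by blast
  define h where "h y = (if y \<in> topspace X then max 0 (min 1 (1 - f y)) else 0)" for y
  have "h \<in> CX X"
    unfolding h_def using f(1) by (intro CX_restrict continuous_intros) auto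
  moreover have "x \<in> topspace X"
    using assms openin_subset by blast
  ultimately show thesis
    using f(2,3) by (intro that[of h]) (force simp: h_def)+
qed

lemma cozero_set_bump:
  assumes "is_cozero_set X Z" "y \<in> Z"
  obtains h where "h \<in> CX X" "\<forall>x\<in>topspace X. 0 \<le> h x \<and> h x \<le> 1" "h y = 1"
    "\<forall>x. x \<notin> Z \<longrightarrow> h x = 0"
proof -
  obtain f where f: "continuous_map X euclideanreal f" "Z = cozero_set X f"
    using assms(1) unfolding is_cozero_set_def by blast
  have y: "f y \<noteq> 0" "y \<in> topspace X"
    using assms(2) f(2) by (auto simp: cozero_set_def)
  define h where "h x = (if x \<in> topspace X then min 1 (\<bar>f x\<bar> / \<bar>f y\<bar>) else 0)" for x
  have "h \<in> CX X"
    unfolding h_def using f(1) y(1) by (intro CX_restrict continuous_intros) auto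
  then show thesis
    using f(2) y by (intro that[of h]) (auto simp: h_def cozero_set_def)
qed

lemma completely_regular_bump_family:
  assumes cr: "completely_regular_space X" and \<U>: "\<forall>U\<in>\<U>. openin X U \<and> U \<noteq> {}"
  obtains h x where "\<And>U. U \<in> \<U> \<Longrightarrow> h U \<in> CX X"
    "\<And>U y. U \<in> \<U> \<Longrightarrow> y \<in> topspace X \<Longrightarrow> 0 \<le> h U y \<and> h U y \<le> 1"
    "\<And>U. U \<in> \<U> \<Longrightarrow> x U \<in> topspace X \<and> h U (x U) = 1"
    "\<And>U y. U \<in> \<U> \<Longrightarrow> y \<notin> U \<Longrightarrow> h U y = 0"
proof -
  define P where "P U h x \<longleftrightarrow> h \<in> CX X \<and> (\<forall>y\<in>topspace X. 0 \<le> h y \<and> h y \<le> 1)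
      \<and> x \<in> topspace X \<and> h x = 1 \<and> (\<forall>y. y \<notin> U \<longrightarrow> h y = 0)" for U h x
  have "\<exists>h x. P U h x" if U: "U \<in> \<U>" for U
  proof -
    obtain x where x: "x \<in> U"
      using \<U> U by blast
    have "openin X U"
      using \<U> U by blast
    then obtain h where "h \<in> CX X" "\<forall>y\<in>topspace X. 0 \<le> h y \<and> h y \<le> 1" "h x = 1"
        "\<forall>y. y \<notin> U \<longrightarrow> h y = 0"
      using completely_regular_bump[OF cr _ x] by metis
    moreover have "x \<in> topspace X"
      using \<open>openin X U\<close> x openin_subset by blast
    ultimately show ?thesis
      unfolding P_def by blast
  qed
  then obtain h where "\<forall>U\<in>\<U>. \<exists>x. P U (h U) x"
    using bchoice[of \<U> "\<lambda>U h. \<exists>x. P U h x"] by blast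
  then obtain x where "\<forall>U\<in>\<U>. P U (h U) (x U)"
    using bchoice[of \<U> "\<lambda>U x. P U (h U) x"] by blast
  then show thesis
    by (intro that[of h x]) (simp_all add: P_def)
qed

subsection \<open>CCC and CCC for cozero sets\<close>

lemma ccc_space_imp_ccc_cozero: "ccc_space X \<Longrightarrow> ccc_cozero X"
  unfolding ccc_space_def ccc_cozero_def by (meson openin_cozero_set)

lemma ccc_cozero_imp_ccc_space:
  assumes "completely_regular_space X" "ccc_cozero X"
  shows "ccc_space X"
proof (rule ccc_spaceI)
  fix \<U> assume \<U>: "\<forall>U\<in>\<U>. openin X U \<and> U \<noteq> {}" "pairwise disjnt \<U>"
  obtain h x where h: "\<And>U. U \<in> \<U> \<Longrightarrow> h U \<in> CX X"
    "\<And>U. U \<in> \<U> \<Longrightarrow> x U \<in> topspace X \<and> h U (x U) = 1"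
    "\<And>U y. U \<in> \<U> \<Longrightarrow> y \<notin> U \<Longrightarrow> h U y = 0"
    using completely_regular_bump_family[OF assms(1) \<U>(1)] by metis
  define Z where "Z U = cozero_set X (h U)" for U
  have Z: "is_cozero_set X (Z U) \<and> Z U \<subseteq> U \<and> Z U \<noteq> {}" if "U \<in> \<U>" for U
    using h[OF that] unfolding Z_def is_cozero_set_def cozero_set_def CX_def by force
  have inj: "inj_on Z \<U>" and disj: "pairwise disjnt (Z ` \<U>)"
    using pairwise_disjnt_shrink[OF \<U>(2), of Z] Z by simp_all
  have "countable (Z ` \<U>)"
    using assms(2) disj Z unfolding ccc_cozero_def by (metis imageE)
  then show "countable \<U>"
    using inj countable_image_inj_on by blast
qed

subsection \<open>Strictly positive functionals\<close>

lemma CbX_lincomb: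
  assumes "f \<in> CbX X" "g \<in> CbX X"
  shows "(\<lambda>x. a * f x + b * g x) \<in> CbX X"
proof -
  obtain B1 B2 where B: "\<forall>x\<in>topspace X. \<bar>f x\<bar> \<le> B1" "\<forall>x\<in>topspace X. \<bar>g x\<bar> \<le> B2"
    using assms unfolding CbX_def by blast
  have "\<bar>a * f x + b * g x\<bar> \<le> \<bar>a\<bar> * B1 + \<bar>b\<bar> * B2" if "x \<in> topspace X" for x
  proof -
    have "\<bar>a * f x + b * g x\<bar> \<le> \<bar>a\<bar> * \<bar>f x\<bar> + \<bar>b\<bar> * \<bar>g x\<bar>"
      by (metis abs_mult abs_triangle_ineq)
    also have "\<dots> \<le> \<bar>a\<bar> * B1 + \<bar>b\<bar> * B2"
      using B that by (intro add_mono mult_left_mono) auto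
    finally show ?thesis .
  qed
  moreover have "(\<lambda>x. a * f x + b * g x) \<in> CX X"
    using assms by (intro CX_lincomb) (auto simp: CbX_def)
  ultimately show ?thesis
    unfolding CbX_def by blast
qed

lemma CbX_if_bounded_CX:
  assumes "f \<in> CX X" "\<forall>x\<in>topspace X. \<bar>f x\<bar> \<le> B"
  shows "f \<in> CbX X"
  using assms unfolding CbX_def by blast

lemma strictly_positive_functional_Cb_linear:
  assumes "strictly_positive_functional_Cb X \<phi>" "f \<in> CbX X" "g \<in> CbX X"
  shows "\<phi> (\<lambda>x. a * f x + b * g x) = a * \<phi> f + b * \<phi> g"
  using assms unfolding strictly_positive_functional_Cb_def by blast

lemma strictly_positive_functional_Cb_mono:
  assumes \<phi>: "strictly_positive_functional_Cb X \<phi>" and fg: "f \<in> CbX X" "g \<in> CbX X" "pw_le X f g"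
  shows "\<phi> f \<le> \<phi> g"
proof -
  have "pw_le X (\<lambda>_. 0) (\<lambda>x. 1 * g x + (- 1) * f x)"
    using fg(3) unfolding pw_le_def by simp
  then have "0 \<le> \<phi> (\<lambda>x. 1 * g x + (- 1) * f x)"
    using \<phi> CbX_lincomb[OF fg(2,1)] unfolding strictly_positive_functional_Cb_def by blast
  then show ?thesis
    using strictly_positive_functional_Cb_linear[OF \<phi> fg(2,1), of 1 "- 1"] by simp
qed

lemma strictly_positive_functional_Cb_pos:
  assumes \<phi>: "strictly_positive_functional_Cb X \<phi>"
    and f: "f \<in> CbX X" "pw_le X (\<lambda>_. 0) f" "x \<in> topspace X" "f x \<noteq> 0"
  shows "0 < \<phi> f"
  using assms unfolding strictly_positive_functional_Cb_def by force

lemma strictly_positive_functional_Cb_sum: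
  assumes \<phi>: "strictly_positive_functional_Cb X \<phi>" and "finite F" "\<And>i. i \<in> F \<Longrightarrow> h i \<in> CbX X"
  shows "(\<lambda>x. \<Sum>i\<in>F. h i x) \<in> CbX X \<and> \<phi> (\<lambda>x. \<Sum>i\<in>F. h i x) = (\<Sum>i\<in>F. \<phi> (h i))"
  using assms(2,3)
proof (induction F rule: finite_induct)
  case empty
  have "(\<lambda>x. 0) \<in> CbX X"
    using CbX_if_bounded_CX[OF zero_CX, of X 0] by simp
  then show ?case
    using strictly_positive_functional_Cb_linear[OF \<phi>, of "\<lambda>x. 0" "\<lambda>x. 0" 0 0] by simp
next
  case (insert i F)
  then have hi: "h i \<in> CbX X" and IH: "(\<lambda>x. \<Sum>j\<in>F. h j x) \<in> CbX X"
    "\<phi> (\<lambda>x. \<Sum>j\<in>F. h j x) = (\<Sum>j\<in>F. \<phi> (h j))"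
    by simp_all
  have "(\<lambda>x. \<Sum>j\<in>insert i F. h j x) = (\<lambda>x. 1 * h i x + 1 * (\<Sum>j\<in>F. h j x))"
    using insert.hyps by simp
  then show ?case
    using CbX_lincomb[OF hi IH(1), of 1 1] strictly_positive_functional_Cb_linear[OF \<phi> hi IH(1), of 1 1]
      IH(2) insert.hyps by simp
qed

lemma sum_le_one_if_disjoint_supports:
  assumes "finite F" "pairwise disjnt F"
    and "\<And>U. U \<in> F \<Longrightarrow> h U x \<le> (1::real)" "\<And>U. U \<in> F \<Longrightarrow> x \<notin> U \<Longrightarrow> h U x = 0"
  shows "(\<Sum>U\<in>F. h U x) \<le> 1"
proof (cases "\<exists>U\<in>F. x \<in> U")
  case True
  then obtain U where U: "U \<in> F" "x \<in> U" by blast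
  have "x \<notin> V" if "V \<in> F - {U}" for V
    using assms(2) U that by (metis DiffE disjnt_iff pairwiseD singletonI)
  then have "(\<Sum>V\<in>F. h V x) = h U x"
    using assms(1,4) U(1) by (subst sum.remove[of F U]) auto
  then show ?thesis
    using assms(3) U(1) by simp
qed (use assms(4) in simp)

lemma countable_if_finite_sums_bounded:
  fixes f :: "'b \<Rightarrow> real"
  assumes "\<And>i. i \<in> A \<Longrightarrow> 0 < f i" "\<And>F. finite F \<Longrightarrow> F \<subseteq> A \<Longrightarrow> sum f F \<le> B"
  shows "countable A"
proof -
  have "f summable_on A"
    using assms by (intro nonneg_bdd_above_summable_on bdd_aboveI[of _ B]) (auto intro: less_imp_le)
  then have "countable {i\<in>A. f i \<noteq> 0}"
    by (rule summable_countable_real)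
  also have "{i\<in>A. f i \<noteq> 0} = A"
    using assms(1) by force
  finally show ?thesis .
qed

lemma strictly_positive_functional_Cb_imp_ccc_space:
  assumes cr: "completely_regular_space X" and \<phi>: "strictly_positive_functional_Cb X \<phi>"
  shows "ccc_space X"
proof (rule ccc_spaceI)
  fix \<U> assume \<U>: "\<forall>U\<in>\<U>. openin X U \<and> U \<noteq> {}" "pairwise disjnt \<U>"
  obtain h x where h: "\<And>U. U \<in> \<U> \<Longrightarrow> h U \<in> CX X"
    "\<And>U y. U \<in> \<U> \<Longrightarrow> y \<in> topspace X \<Longrightarrow> 0 \<le> h U y \<and> h U y \<le> 1"
    "\<And>U. U \<in> \<U> \<Longrightarrow> x U \<in> topspace X \<and> h U (x U) = 1"
    "\<And>U y. U \<in> \<U> \<Longrightarrow> y \<notin> U \<Longrightarrow> h U y = 0"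
    using completely_regular_bump_family[OF cr \<U>(1)] by metis
  have hCb: "h U \<in> CbX X" if "U \<in> \<U>" for U
    using h(1,2)[OF that] by (intro CbX_if_bounded_CX[of _ _ 1]) auto
  let ?one = "indicator (topspace X) :: 'a \<Rightarrow> real"
  have oneCb: "?one \<in> CbX X"
    by (intro CbX_if_bounded_CX[OF indicator_topspace_CX, of _ 1]) simp
  show "countable \<U>"
  proof (rule countable_if_finite_sums_bounded)
    show "0 < \<phi> (h U)" if "U \<in> \<U>" for U
      using h(2,3)[OF that] hCb[OF that]
      by (intro strictly_positive_functional_Cb_pos[OF \<phi>, of _ "x U"]) (auto simp: pw_le_def)
    fix F assume F: "finite F" "F \<subseteq> \<U>"
    then have sum: "(\<lambda>y. \<Sum>U\<in>F. h U y) \<in> CbX X \<and> \<phi> (\<lambda>y. \<Sum>U\<in>F. h U y) = (\<Sum>U\<in>F. \<phi> (h U))"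
      using hCb by (intro strictly_positive_functional_Cb_sum[OF \<phi>]) auto
    have "pw_le X (\<lambda>y. \<Sum>U\<in>F. h U y) ?one"
      unfolding pw_le_def
    proof
      fix y assume "y \<in> topspace X"
      then show "(\<Sum>U\<in>F. h U y) \<le> ?one y"
        using F h(2,4) pairwise_subset[OF \<U>(2) F(2)]
        by (simp add: subset_iff sum_le_one_if_disjoint_supports)
    qed
    then show "(\<Sum>U\<in>F. \<phi> (h U)) \<le> \<phi> ?one"
      using strictly_positive_functional_Cb_mono[OF \<phi> _ oneCb] sum by metis
  qed
qed

subsection \<open>CCC implies the countable sup property\<close>

lemma exists_maximal_pairwise_disjnt:
  obtains M where "\<forall>V\<in>M. P V" "pairwise disjnt M"
    "\<And>N. \<forall>V\<in>N. P V \<Longrightarrow> pairwise disjnt N \<Longrightarrow> M \<subseteq> N \<Longrightarrow> N = M"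
proof -
  define \<A> where "\<A> = {M. (\<forall>V\<in>M. P V) \<and> pairwise disjnt M}"
  have "\<exists>M\<in>\<A>. \<forall>N\<in>\<A>. M \<subseteq> N \<longrightarrow> N = M"
  proof (rule Zorn_Lemma, rule ballI)
    fix \<C> assume "\<C> \<in> chains \<A>"
    then have \<C>: "\<C> \<subseteq> \<A>" "\<forall>M\<in>\<C>. \<forall>N\<in>\<C>. M \<subseteq> N \<or> N \<subseteq> M"
      unfolding chains_def chain_subset_def by blast+
    have "disjnt V1 V2" if V: "V1 \<in> \<Union>\<C>" "V2 \<in> \<Union>\<C>" "V1 \<noteq> V2" for V1 V2
    proof -
      obtain M where M: "M \<in> \<C>" "V1 \<in> M" "V2 \<in> M"
        using V(1,2) \<C>(2) by blast
      then have "pairwise disjnt M"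
        using \<C>(1) unfolding \<A>_def by blast
      then show ?thesis
        using M(2,3) V(3) by (rule pairwiseD)
    qed
    then have "pairwise disjnt (\<Union>\<C>)"
      by (rule pairwiseI)
    moreover have "\<forall>V\<in>\<Union>\<C>. P V"
      using \<C>(1) unfolding \<A>_def by blast
    ultimately show "\<Union>\<C> \<in> \<A>"
      unfolding \<A>_def by blast
  qed
  then obtain M where "M \<in> \<A>" "\<forall>N\<in>\<A>. M \<subseteq> N \<longrightarrow> N = M"
    by blast
  then show thesis
    by (intro that[of M]) (simp_all add: \<A>_def)
qed

lemma ccc_space_countable_dense_subfamily:
  assumes ccc: "ccc_space X" and W: "\<And>i. i \<in> I \<Longrightarrow> openin X (W i)"
    and dense: "\<And>V. openin X V \<Longrightarrow> V \<noteq> {} \<Longrightarrow> \<exists>i\<in>I. V \<inter> W i \<noteq> {}"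
  shows "\<exists>J\<subseteq>I. countable J \<and> (\<forall>V. openin X V \<longrightarrow> V \<noteq> {} \<longrightarrow> (\<exists>i\<in>J. V \<inter> W i \<noteq> {}))"
proof -
  define P where "P V \<longleftrightarrow> openin X V \<and> V \<noteq> {} \<and> (\<exists>i\<in>I. V \<subseteq> W i)" for V
  obtain M where M: "\<forall>V\<in>M. P V" "pairwise disjnt M"
    and max: "\<And>N. \<forall>V\<in>N. P V \<Longrightarrow> pairwise disjnt N \<Longrightarrow> M \<subseteq> N \<Longrightarrow> N = M"
    using exists_maximal_pairwise_disjnt[of P] by blast
  have "countable M"
    using ccc M unfolding ccc_space_def P_def by blast
  obtain \<iota> where \<iota>: "\<And>V. V \<in> M \<Longrightarrow> \<iota> V \<in> I \<and> V \<subseteq> W (\<iota> V)"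
    using M(1) unfolding P_def by metis
  have "\<exists>j\<in>\<iota> ` M. V \<inter> W j \<noteq> {}" if V: "openin X V" "V \<noteq> {}" for V
  proof (rule ccontr)
    assume miss: "\<not> (\<exists>j\<in>\<iota> ` M. V \<inter> W j \<noteq> {})"
    obtain i where i: "i \<in> I" "V \<inter> W i \<noteq> {}"
      using dense[OF V] by blast
    have new: "P (V \<inter> W i)"
      using V(1) W[OF i(1)] i unfolding P_def by blast
    have "disjnt (V \<inter> W i) U" if "U \<in> M" for U
      using miss \<iota>[OF that] that by (auto simp: disjnt_def)
    then have "pairwise disjnt (insert (V \<inter> W i) M)"
      using M(2) by (auto simp: pairwise_insert disjnt_sym)
    then have "V \<inter> W i \<in> M"
      using max[of "insert (V \<inter> W i) M"] M(1) new by blast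
    then have "V \<inter> W i \<subseteq> W (\<iota> (V \<inter> W i))" and "\<iota> (V \<inter> W i) \<in> \<iota> ` M"
      using \<iota> by auto
    then show False
      using miss i(2) by blast
  qed
  moreover have "\<iota> ` M \<subseteq> I"
    using \<iota> by blast
  ultimately show ?thesis
    using \<open>countable M\<close> by blast
qed

lemma is_sup_CX_approx:
  assumes cr: "completely_regular_space X" and sup: "is_sup_CX X S s"
    and "0 < \<epsilon>" and V: "openin X V" "V \<noteq> {}"
  shows "\<exists>f\<in>S. \<exists>x\<in>V. s x - \<epsilon> < f x"
proof (rule ccontr)
  assume "\<not> (\<exists>f\<in>S. \<exists>x\<in>V. s x - \<epsilon> < f x)"
  then have below: "\<And>f x. f \<in> S \<Longrightarrow> x \<in> V \<Longrightarrow> f x \<le> s x - \<epsilon>"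
    by force
  obtain x0 where x0: "x0 \<in> V"
    using V(2) by blast
  obtain u where u: "u \<in> CX X" "\<forall>y\<in>topspace X. 0 \<le> u y \<and> u y \<le> 1" "u x0 = 1"
    "\<forall>y. y \<notin> V \<longrightarrow> u y = 0"
    using completely_regular_bump[OF cr V(1) x0] by blast
  have sC: "s \<in> CX X" and ub: "\<And>f. f \<in> S \<Longrightarrow> pw_le X f s"
    using sup unfolding is_sup_CX_def by blast+
  let ?g = "\<lambda>x. 1 * s x + (- \<epsilon>) * u x"
  have "pw_le X f ?g" if f: "f \<in> S" for f
    unfolding pw_le_def
  proof
    fix x assume x: "x \<in> topspace X"
    show "f x \<le> ?g x"
    proof (cases "x \<in> V")
      case True
      have "\<epsilon> * u x \<le> \<epsilon>"
        using u(2) x \<open>0 < \<epsilon>\<close> by (simp add: mult_left_le)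
      then show ?thesis
        using below[OF f True] by simp
    next
      case False
      then show ?thesis
        using ub[OF f] u(4) x unfolding pw_le_def by simp
    qed
  qed
  then have "pw_le X s ?g"
    using sup CX_lincomb[OF sC u(1)] unfolding is_sup_CX_def by blast
  moreover have "x0 \<in> topspace X"
    using V(1) x0 openin_subset by blast
  ultimately show False
    using u(3) \<open>0 < \<epsilon>\<close> unfolding pw_le_def by force
qed

lemma is_sup_CX_if_approx:
  assumes sC: "s \<in> CX X" and ub: "\<forall>f\<in>T. pw_le X f s"
    and approx: "\<And>\<epsilon> V. 0 < \<epsilon> \<Longrightarrow> openin X V \<Longrightarrow> V \<noteq> {} \<Longrightarrow> \<exists>f\<in>T. \<exists>x\<in>V. s x - \<epsilon> < f x"
  shows "is_sup_CX X T s"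
  unfolding is_sup_CX_def
proof (intro conjI ballI impI)
  show "s \<in> CX X" by (rule sC)
  show "pw_le X f s" if "f \<in> T" for f
    using ub that by blast
  fix g assume g: "g \<in> CX X" "\<forall>f\<in>T. pw_le X f g"
  show "pw_le X s g"
    unfolding pw_le_def
  proof (rule ballI, rule ccontr)
    fix x0 assume x0: "x0 \<in> topspace X" "\<not> s x0 \<le> g x0"
    define \<epsilon> where "\<epsilon> = (s x0 - g x0) / 3"
    have "0 < \<epsilon>"
      using x0(2) by (simp add: \<epsilon>_def)
    define V where "V = {x \<in> topspace X. g x < s x - 2 * \<epsilon>}"
    have "openin X V"
      unfolding V_def using sC g(1)
      by (intro openin_continuous_map_less continuous_intros) (auto simp: CX_def)
    moreover have "x0 \<in> V"
      using x0 by (simp add: V_def \<epsilon>_def field_simps)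
    ultimately obtain f x where "f \<in> T" "x \<in> V" "s x - \<epsilon> < f x"
      using approx[OF \<open>0 < \<epsilon>\<close>] by blast
    then show False
      using g(2) \<open>0 < \<epsilon>\<close> unfolding V_def pw_le_def by force
  qed
qed

lemma ccc_space_countable_approx_subset:
  assumes cr: "completely_regular_space X" and ccc: "ccc_space X"
    and S: "S \<subseteq> CX X" and sup: "is_sup_CX X S s" and "0 < \<epsilon>"
  shows "\<exists>J\<subseteq>S. countable J \<and> (\<forall>V. openin X V \<longrightarrow> V \<noteq> {} \<longrightarrow> (\<exists>f\<in>J. \<exists>x\<in>V. s x - \<epsilon> < f x))"
proof -
  define W where "W f = {x \<in> topspace X. s x - \<epsilon> < f x}" for f
  have "s \<in> CX X"
    using sup unfolding is_sup_CX_def by blast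
  then have "openin X (W f)" if "f \<in> S" for f
    unfolding W_def using S that
    by (intro openin_continuous_map_less continuous_intros) (auto simp: CX_def)
  moreover have "\<exists>f\<in>S. V \<inter> W f \<noteq> {}" if V: "openin X V" "V \<noteq> {}" for V
  proof -
    obtain f x where "f \<in> S" "x \<in> V" "s x - \<epsilon> < f x"
      using is_sup_CX_approx[OF cr sup \<open>0 < \<epsilon>\<close> V] by blast
    moreover have "x \<in> topspace X"
      using V(1) \<open>x \<in> V\<close> openin_subset by blast
    ultimately show ?thesis
      unfolding W_def by blast
  qed
  ultimately have "\<exists>J\<subseteq>S. countable J \<and> (\<forall>V. openin X V \<longrightarrow> V \<noteq> {} \<longrightarrow> (\<exists>f\<in>J. V \<inter> W f \<noteq> {}))"
    by (rule ccc_space_countable_dense_subfamily[OF ccc])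
  moreover have "V \<inter> W f \<noteq> {} \<longleftrightarrow> (\<exists>x\<in>V. s x - \<epsilon> < f x)" if "openin X V" for V f
    using openin_subset[OF that] unfolding W_def by blast
  ultimately show ?thesis
    by (metis (no_types, lifting))
qed

lemma ccc_space_imp_countable_sup_property_CX:
  assumes cr: "completely_regular_space X" and ccc: "ccc_space X"
  shows "countable_sup_property_CX X"
  unfolding countable_sup_property_CX_def
proof (intro allI impI)
  fix S s assume "S \<subseteq> CX X \<and> S \<noteq> {} \<and> is_sup_CX X S s"
  then have S: "S \<subseteq> CX X" and sup: "is_sup_CX X S s"
    by blast+
  then have sC: "s \<in> CX X" and ub: "\<forall>f\<in>S. pw_le X f s"
    unfolding is_sup_CX_def by blast+
  have "\<forall>n::nat. \<exists>J\<subseteq>S. countable J \<and>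
      (\<forall>V. openin X V \<longrightarrow> V \<noteq> {} \<longrightarrow> (\<exists>f\<in>J. \<exists>x\<in>V. s x - 1 / Suc n < f x))"
    using ccc_space_countable_approx_subset[OF cr ccc S sup] by simp
  then obtain J where J: "\<And>n. J n \<subseteq> S" "\<And>n. countable (J n)"
    "\<And>n V. openin X V \<Longrightarrow> V \<noteq> {} \<Longrightarrow> \<exists>f\<in>J n. \<exists>x\<in>V. s x - 1 / Suc n < f x"
    by metis
  have "is_sup_CX X (\<Union>n. J n) s"
  proof (rule is_sup_CX_if_approx[OF sC])
    show "\<forall>f\<in>\<Union>n. J n. pw_le X f s"
      using J(1) ub by blast
    fix \<epsilon> :: real and V assume "0 < \<epsilon>" "openin X V" "V \<noteq> {}"
    obtain n where n: "1 / Suc n < \<epsilon>"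
      using \<open>0 < \<epsilon>\<close> nat_approx_posE by blast
    obtain f x where "f \<in> J n" "x \<in> V" "s x - 1 / Suc n < f x"
      using J(3)[OF \<open>openin X V\<close> \<open>V \<noteq> {}\<close>] by blast
    moreover have "s x - \<epsilon> < f x"
      using \<open>s x - 1 / Suc n < f x\<close> n by linarith
    ultimately show "\<exists>f\<in>\<Union>n. J n. \<exists>x\<in>V. s x - \<epsilon> < f x"
      by blast
  qed
  moreover have "countable (\<Union>n. J n)"
    using J(2) by (intro countable_UN) auto
  ultimately show "\<exists>T\<subseteq>S. countable T \<and> is_sup_CX X T s"
    using J(1) by blast
qed

subsection \<open>The countable sup property implies CCC for cozero sets\<close>

definition subordinate_bumps :: "'a topology \<Rightarrow> 'a set set \<Rightarrow> ('a \<Rightarrow> real) set" where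
  "subordinate_bumps X \<U> = {u \<in> CX X. (\<forall>x\<in>topspace X. 0 \<le> u x \<and> u x \<le> 1) \<and>
     ((\<exists>Z\<in>\<U>. \<forall>x. x \<notin> Z \<longrightarrow> u x = 0) \<or> (\<forall>x\<in>\<Union>\<U>. u x = 0))}"

lemma is_sup_CX_subordinate_bumps:
  assumes cr: "completely_regular_space X" and \<U>: "\<forall>Z\<in>\<U>. is_cozero_set X Z"
  shows "is_sup_CX X (subordinate_bumps X \<U>) (indicator (topspace X))"
proof (rule is_sup_CX_if_approx[OF indicator_topspace_CX])
  show "\<forall>u\<in>subordinate_bumps X \<U>. pw_le X u (indicator (topspace X))"
    by (simp add: subordinate_bumps_def pw_le_def)
  fix \<epsilon> :: real and V assume "0 < \<epsilon>" and V: "openin X V" "V \<noteq> {}"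
  have "\<exists>u\<in>subordinate_bumps X \<U>. \<exists>y\<in>V. u y = 1"
  proof (cases "\<exists>Z\<in>\<U>. Z \<inter> V \<noteq> {}")
    case True
    then obtain Z y where Z: "Z \<in> \<U>" "y \<in> Z" "y \<in> V"
      by blast
    have "is_cozero_set X Z"
      using \<U> Z(1) by blast
    then obtain u where u: "u \<in> CX X" "\<forall>x\<in>topspace X. 0 \<le> u x \<and> u x \<le> 1" "u y = 1"
      "\<forall>x. x \<notin> Z \<longrightarrow> u x = 0"
      using cozero_set_bump Z(2) by metis
    then have "u \<in> subordinate_bumps X \<U>"
      using Z(1) unfolding subordinate_bumps_def by blast
    then show ?thesis
      using u(3) Z(3) by blast
  next
    case False
    obtain y where y: "y \<in> V"
      using V(2) by blast
    obtain u where u: "u \<in> CX X" "\<forall>x\<in>topspace X. 0 \<le> u x \<and> u x \<le> 1" "u y = 1"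
      "\<forall>x. x \<notin> V \<longrightarrow> u x = 0"
      using completely_regular_bump[OF cr V(1) y] by metis
    have "\<forall>x\<in>\<Union>\<U>. u x = 0"
      using False u(4) by blast
    then have "u \<in> subordinate_bumps X \<U>"
      using u(1,2) unfolding subordinate_bumps_def by blast
    then show ?thesis
      using u(3) y by blast
  qed
  then obtain u y where "u \<in> subordinate_bumps X \<U>" "y \<in> V" "u y = 1"
    by blast
  moreover have "y \<in> topspace X"
    using V(1) \<open>y \<in> V\<close> openin_subset by blast
  moreover have "indicator (topspace X) y - \<epsilon> < (1::real)"
    using \<open>0 < \<epsilon>\<close> \<open>y \<in> topspace X\<close> by simp
  ultimately show "\<exists>u\<in>subordinate_bumps X \<U>. \<exists>y\<in>V. indicator (topspace X) y - \<epsilon> < u y"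
    by metis
qed

lemma countable_members_meeting_subordinate_bump:
  assumes disj: "pairwise disjnt \<U>" and u: "u \<in> subordinate_bumps X \<U>"
  shows "countable {Z\<in>\<U>. \<exists>y\<in>Z. u y \<noteq> 0}"
proof -
  consider Z0 where "Z0 \<in> \<U>" "\<forall>x. x \<notin> Z0 \<longrightarrow> u x = 0" | "\<forall>x\<in>\<Union>\<U>. u x = 0"
    using u unfolding subordinate_bumps_def by blast
  then show ?thesis
  proof cases
    case (1 Z0)
    have "Z = Z0" if "Z \<in> \<U>" "y \<in> Z" "u y \<noteq> 0" for Z y
    proof (rule ccontr)
      assume "Z \<noteq> Z0"
      with disj that(1) 1(1) have "disjnt Z Z0"
        by (simp add: pairwiseD)
      then show False
        using that(2,3) 1(2) by (auto simp: disjnt_def)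
    qed
    then have "{Z\<in>\<U>. \<exists>y\<in>Z. u y \<noteq> 0} \<subseteq> {Z0}"
      by blast
    then show ?thesis
      by (rule countable_subset) simp
  next
    case 2
    then have "{Z\<in>\<U>. \<exists>y\<in>Z. u y \<noteq> 0} = {}"
      by blast
    then show ?thesis
      by (simp only: countable_empty)
  qed
qed

lemma is_sup_CX_indicator_meets_cozero_set:
  assumes cz: "is_cozero_set X Z" "y \<in> Z"
    and le1: "\<forall>u\<in>T. \<forall>x\<in>topspace X. u x \<le> 1" and sup: "is_sup_CX X T (indicator (topspace X))"
  shows "\<exists>u\<in>T. \<exists>x\<in>Z. u x \<noteq> 0"
proof (rule ccontr)
  assume "\<not> (\<exists>u\<in>T. \<exists>x\<in>Z. u x \<noteq> 0)"
  then have vanish: "\<And>u x. u \<in> T \<Longrightarrow> x \<in> Z \<Longrightarrow> u x = 0"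
    by blast
  obtain b where b: "b \<in> CX X" "\<forall>x\<in>topspace X. 0 \<le> b x \<and> b x \<le> 1" "b y = 1"
    "\<forall>x. x \<notin> Z \<longrightarrow> b x = 0"
    using cozero_set_bump[OF cz] by metis
  let ?one = "indicator (topspace X) :: 'a \<Rightarrow> real"
  let ?h = "\<lambda>x. 1 * ?one x + (- 1) * b x"
  have "pw_le X u ?h" if u: "u \<in> T" for u
    unfolding pw_le_def
  proof
    fix x assume x: "x \<in> topspace X"
    show "u x \<le> ?h x"
      using vanish[OF u] le1 u b(2,4) x by (cases "x \<in> Z") auto
  qed
  then have "pw_le X ?one ?h"
    using sup CX_lincomb[OF indicator_topspace_CX b(1)] unfolding is_sup_CX_def by blast
  moreover have "y \<in> topspace X"
    using openin_subset[OF openin_cozero_set[OF cz(1)]] cz(2) by blast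
  ultimately have "?one y \<le> ?h y"
    unfolding pw_le_def by blast
  then show False
    using \<open>y \<in> topspace X\<close> b(3) by simp
qed

lemma countable_sup_property_CX_imp_ccc_cozero:
  assumes cr: "completely_regular_space X" and csp: "countable_sup_property_CX X"
  shows "ccc_cozero X"
  unfolding ccc_cozero_def
proof (intro allI impI)
  fix \<U> assume \<U>: "(\<forall>Z\<in>\<U>. is_cozero_set X Z) \<and> pairwise disjnt \<U>"
  have "(\<lambda>x. 0) \<in> subordinate_bumps X \<U>"
    by (simp add: subordinate_bumps_def zero_CX)
  moreover have "subordinate_bumps X \<U> \<subseteq> CX X"
    by (auto simp: subordinate_bumps_def)
  moreover have "is_sup_CX X (subordinate_bumps X \<U>) (indicator (topspace X))"
    using is_sup_CX_subordinate_bumps[OF cr] \<U> by blast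
  ultimately obtain T where T: "T \<subseteq> subordinate_bumps X \<U>" "countable T"
    "is_sup_CX X T (indicator (topspace X))"
    using csp unfolding countable_sup_property_CX_def by blast
  define \<Z> where "\<Z> = (\<Union>u\<in>T. {Z\<in>\<U>. \<exists>y\<in>Z. u y \<noteq> 0})"
  have "countable {Z\<in>\<U>. \<exists>y\<in>Z. u y \<noteq> 0}" if "u \<in> T" for u
  proof (rule countable_members_meeting_subordinate_bump)
    show "pairwise disjnt \<U>"
      using \<U> by blast
    show "u \<in> subordinate_bumps X \<U>"
      using T(1) that by blast
  qed
  then have "countable \<Z>"
    unfolding \<Z>_def using T(2) by blast
  moreover have "\<U> - {{}} \<subseteq> \<Z>"
  proof
    fix Z assume Z: "Z \<in> \<U> - {{}}"
    then obtain y where y: "y \<in> Z"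
      by blast
    have cz: "is_cozero_set X Z"
      using \<U> Z by blast
    have le1: "\<forall>u\<in>T. \<forall>x\<in>topspace X. u x \<le> 1"
      using T(1) by (auto simp: subordinate_bumps_def)
    have "\<exists>u\<in>T. \<exists>x\<in>Z. u x \<noteq> 0"
      by (rule is_sup_CX_indicator_meets_cozero_set[OF cz y le1 T(3)])
    then show "Z \<in> \<Z>"
      using Z unfolding \<Z>_def by blast
  qed
  ultimately have "countable (\<U> - {{}})"
    by (rule countable_subset[rotated])
  then show "countable \<U>"
    by (rule countable_if_countable_minus_empty)
qed

theorem theorem4p8:
  fixes X :: "'a topology"
  assumes "tychonoff_space X"
  shows "(ccc_space X \<longleftrightarrow> ccc_cozero X)
    \<and> (ccc_cozero X \<longleftrightarrow> countable_sup_property_CX X)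
    \<and> ((\<exists>\<phi>. strictly_positive_functional_Cb X \<phi>) \<longrightarrow>
         ccc_space X \<and> ccc_cozero X \<and> countable_sup_property_CX X)"
proof -
  have cr: "completely_regular_space X"
    using assms unfolding tychonoff_space_def by blast
  have ab: "ccc_space X \<longleftrightarrow> ccc_cozero X"
    using ccc_space_imp_ccc_cozero ccc_cozero_imp_ccc_space[OF cr] by blast
  have bc: "ccc_cozero X \<longleftrightarrow> countable_sup_property_CX X"
    using ab ccc_space_imp_countable_sup_property_CX[OF cr]
      countable_sup_property_CX_imp_ccc_cozero[OF cr] by blast
  have "(\<exists>\<phi>. strictly_positive_functional_Cb X \<phi>) \<longrightarrow> ccc_space X"
    using strictly_positive_functional_Cb_imp_ccc_space[OF cr] by blast
  with ab bc show ?thesis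
    by blast
qed

end
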